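(* Every infinite set $X\subseteq\omega$ has an infinite subset $B$ such that for all infinite $C, D\subseteq B$ there is no Turing functional $\Phi$ with $\Phi(S) = C$ for every infinite $S\subseteq D$. *)

theory Defs
  imports Main
begin

text \<open>Turing functionals, modelled as codes of partial recursive functions
(Kleene's mu-recursive functions) with one query set for a set of naturals.\<close>

datatype recf =
    Zero
  | Succ
  | Proj nat
  | Comp recf "recf list"
  | Prim recf recf
  | Mn recf
  | Query

inductive oeval :: "nat set \<Rightarrow> recf \<Rightarrow> nat list \<Rightarrow> nat \<Rightarrow> bool" for A :: "nat set" where
  zero:   "oeval A Zero xs 0"
| succ:   "oeval A Succ [x] (Suc x)"
| proj:   "i < length xs \<Longrightarrow> oeval A (Proj i) xs (xs ! i)"
| comp:   "list_all2 (\<lambda>g y. oeval A g xs y) gs ys \<Longrightarrow> oeval A f ys y \<Longrightarrow> oeval A (Comp f gs) xs y"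
| prim0:  "oeval A f xs y \<Longrightarrow> oeval A (Prim f g) (0 # xs) y"
| primS:  "oeval A (Prim f g) (n # xs) r \<Longrightarrow> oeval A g (r # n # xs) y
           \<Longrightarrow> oeval A (Prim f g) (Suc n # xs) y"
| mn:     "oeval A f (y # xs) 0 \<Longrightarrow> (\<forall>z<y. \<exists>v. oeval A f (z # xs) v \<and> v \<noteq> 0)
           \<Longrightarrow> oeval A (Mn f) xs y"
| query:  "oeval A Query [x] (if x \<in> A then 1 else 0)"

text \<open>\<open>\<Phi>(S) = C\<close>: with query set \<open>S\<close>, \<open>\<Phi>\<close> is total on unary inputs and computes
the characteristic function of \<open>C\<close>.\<close>
definition functional_computes :: "recf \<Rightarrow> nat set \<Rightarrow> nat set \<Rightarrow> bool" where
  "functional_computes \<Phi> S C \<longleftrightarrow>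
     (\<forall>n y. oeval S \<Phi> [n] y \<longleftrightarrow> y = (if n \<in> C then 1 else 0))"

end

theory Submission
  imports Defs "HOL-Library.Countable" "HOL-Library.Infinite_Set"
begin

text \<open>Enumerate the functionals as \<open>\<Phi>\<^sub>0, \<Phi>\<^sub>1, \<dots>\<close> and build \<open>B = {b\<^sub>0 < b\<^sub>1 < \<dots>}\<close> by
fusion.  At stage \<open>k\<close> the element \<open>b\<^sub>k\<close> is taken from a finite block \<open>Z\<^sub>k\<close>, lying above the
earlier elements and below the reservoir \<open>M\<^bsub>k+1\<^esub>\<close> of later ones, such that for every \<open>e \<le> k\<close>
each finite oracle piece from \<open>M\<^bsub>k+1\<^esub>\<close> that forces \<open>\<Phi>\<^sub>e(b\<^sub>k) = 1\<close> also forces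
\<open>\<Phi>\<^sub>e(z) = 1\<close> for some \<open>z \<in> Z\<^sub>k\<close> other than \<open>b\<^sub>k\<close>, hence outside \<open>B\<close>.  Such a \<open>b\<^sub>k\<close> exists
once \<open>Z\<^sub>k\<close> has more than \<open>k + 1\<close> elements: by the Nash-Williams theorem we may shrink the
reservoir so that for each \<open>e\<close> and \<open>z\<close> the oracle pieces forcing \<open>\<Phi>\<^sub>e(z) = 1\<close> and no other
\<open>\<Phi>\<^sub>e(z') = 1\<close> either never occur as subsets or occur as an initial segment of every
infinite subset; the latter can happen for at most one \<open>z\<close> per \<open>e\<close>.

If \<open>\<Phi>\<^sub>e(S) = C\<close> for every infinite \<open>S \<subseteq> D\<close>, take \<open>k \<ge> e\<close> with \<open>b\<^sub>k \<in> C\<close>.  By the use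
principle some finite initial segment of \<open>S = D \<inter> M\<^bsub>k+1\<^esub>\<close> forces \<open>\<Phi>\<^sub>e(b\<^sub>k) = 1\<close>, so it forces
\<open>\<Phi>\<^sub>e(z) = 1\<close> for some \<open>z \<in> Z\<^sub>k - {b\<^sub>k}\<close>; completing it by a tail of \<open>D\<close> shows
\<open>z \<in> C \<subseteq> B\<close>, a contradiction.\<close>

section \<open>The use principle\<close>

definition finitely_determined :: "(nat set \<Rightarrow> bool) \<Rightarrow> nat set \<Rightarrow> bool" where
  "finitely_determined P A \<longleftrightarrow> (\<exists>u. \<forall>A'. A' \<inter> {..<u} = A \<inter> {..<u} \<longrightarrow> P A')"

lemma finitely_determined_mono:
  "finitely_determined P A \<Longrightarrow> (\<And>A'. P A' \<Longrightarrow> Q A') \<Longrightarrow> finitely_determined Q A"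
  unfolding finitely_determined_def by meson

lemma initial_segment_eq_mono:
  fixes u v :: nat
  assumes "A \<inter> {..<u} = B \<inter> {..<u}" and "v \<le> u"
  shows "A \<inter> {..<v} = B \<inter> {..<v}"
proof -
  have "A \<inter> {..<v} = (A \<inter> {..<u}) \<inter> {..<v}" and "B \<inter> {..<v} = (B \<inter> {..<u}) \<inter> {..<v}"
    using \<open>v \<le> u\<close> by auto
  then show ?thesis using assms(1) by simp
qed

lemma finitely_determined_conj:
  assumes "finitely_determined P A" and "finitely_determined Q A"
  shows "finitely_determined (\<lambda>A'. P A' \<and> Q A') A"
proof -
  obtain u where u: "\<And>A'. A' \<inter> {..<u} = A \<inter> {..<u} \<Longrightarrow> P A'"
    using assms(1) unfolding finitely_determined_def by meson
  obtain v where v: "\<And>A'. A' \<inter> {..<v} = A \<inter> {..<v} \<Longrightarrow> Q A'"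
    using assms(2) unfolding finitely_determined_def by meson
  have "P A' \<and> Q A'" if "A' \<inter> {..<max u v} = A \<inter> {..<max u v}" for A'
  proof
    show "P A'" by (rule u, rule initial_segment_eq_mono[OF that]) simp
    show "Q A'" by (rule v, rule initial_segment_eq_mono[OF that]) simp
  qed
  then show ?thesis unfolding finitely_determined_def by meson
qed

lemma finitely_determined_all_less:
  fixes n :: nat
  assumes "\<And>i. i < n \<Longrightarrow> finitely_determined (P i) A"
  shows "finitely_determined (\<lambda>A'. \<forall>i<n. P i A') A"
  using assms
proof (induction n)
  case 0
  then show ?case unfolding finitely_determined_def by simp
next
  case (Suc n)
  have "finitely_determined (\<lambda>A'. \<forall>i<n. P i A') A"
    by (rule Suc.IH) (simp add: Suc.prems)
  moreover have "finitely_determined (P n) A"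
    by (simp add: Suc.prems)
  ultimately have "finitely_determined (\<lambda>A'. (\<forall>i<n. P i A') \<and> P n A') A"
    by (rule finitely_determined_conj)
  then show ?case
    by (rule finitely_determined_mono) (simp add: less_Suc_eq)
qed

lemma oeval_finitely_determined:
  "oeval A f xs y \<Longrightarrow> finitely_determined (\<lambda>A'. oeval A' f xs y) A"
proof (induction rule: oeval.induct)
  case (zero xs)
  then show ?case unfolding finitely_determined_def by (auto intro: oeval.zero)
next
  case (succ x)
  then show ?case unfolding finitely_determined_def by (auto intro: oeval.succ)
next
  case (proj i xs)
  then show ?case unfolding finitely_determined_def by (auto intro: oeval.proj)
next
  case (comp xs gs ys f y)
  then have "length gs = length ys"
    and "\<And>i. i < length gs \<Longrightarrow> finitely_determined (\<lambda>A'. oeval A' (gs ! i) xs (ys ! i)) A"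
    by (auto simp: list_all2_conv_all_nth)
  then have "finitely_determined (\<lambda>A'. \<forall>i<length gs. oeval A' (gs ! i) xs (ys ! i)) A"
    by (intro finitely_determined_all_less)
  then have "finitely_determined (\<lambda>A'. list_all2 (\<lambda>g y. oeval A' g xs y) gs ys) A"
    by (rule finitely_determined_mono) (simp add: list_all2_conv_all_nth \<open>length gs = length ys\<close>)
  from finitely_determined_conj[OF this comp.IH(2)] show ?case
    by (rule finitely_determined_mono) (auto intro: oeval.comp)
next
  case (prim0 f xs y g)
  from prim0.IH show ?case
    by (rule finitely_determined_mono) (rule oeval.prim0)
next
  case (primS f g n xs r y)
  from finitely_determined_conj[OF primS.IH] show ?case
    by (rule finitely_determined_mono) (auto intro: oeval.primS)
next
  case (mn f y xs)
  have "finitely_determined (\<lambda>A'. \<exists>v. oeval A' f (z # xs) v \<and> v \<noteq> 0) A" if "z < y" for z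
  proof -
    obtain v where "finitely_determined (\<lambda>A'. oeval A' f (z # xs) v) A" and "v \<noteq> 0"
      using mn.IH(2) \<open>z < y\<close> by auto
    then show ?thesis by (auto elim: finitely_determined_mono)
  qed
  then have "finitely_determined (\<lambda>A'. \<forall>z<y. \<exists>v. oeval A' f (z # xs) v \<and> v \<noteq> 0) A"
    by (rule finitely_determined_all_less)
  from finitely_determined_conj[OF mn.IH(1) this] show ?case
    by (rule finitely_determined_mono) (auto intro: oeval.mn)
next
  case (query x)
  have "oeval A' Query [x] (if x \<in> A then 1 else 0)" if "A' \<inter> {..<Suc x} = A \<inter> {..<Suc x}" for A'
  proof -
    have "x \<in> A' \<longleftrightarrow> x \<in> A" using that by (auto simp: set_eq_iff)
    then show ?thesis using oeval.query[of A' x] by simp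
  qed
  then show ?case unfolding finitely_determined_def by meson
qed

section \<open>Fusion sequences\<close>

lemma fusion_sequence:
  fixes P :: "nat set \<Rightarrow> nat set \<Rightarrow> bool" and Q :: "nat set \<Rightarrow> nat \<Rightarrow> nat set \<Rightarrow> bool"
  assumes start: "P {} M0"
    and step: "\<And>A M. P A M \<Longrightarrow>
      \<exists>a M'. a \<in> M \<and> M' \<subseteq> M \<and> (\<forall>x\<in>M'. a < x) \<and> Q A a M' \<and> P (insert a A) M'"
  obtains a :: "nat \<Rightarrow> nat" and M :: "nat \<Rightarrow> nat set"
  where "M 0 = M0" and "strict_mono a" and "\<forall>k. a ` {k..} \<subseteq> M k"
    and "\<forall>k. P (a ` {..<k}) (M k)" and "\<forall>k. Q (a ` {..<k}) (a k) (M (Suc k))"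
proof -
  define good where "good A M a M' \<longleftrightarrow>
      a \<in> M \<and> M' \<subseteq> M \<and> (\<forall>x\<in>M'. a < x) \<and> Q A a M' \<and> P (insert a A) M'" for A M a M'
  have "\<forall>A M. \<exists>a M'. P A M \<longrightarrow> good A M a M'"
    using step unfolding good_def by blast
  then obtain pick shrink where "\<And>A M. P A M \<Longrightarrow> good A M (pick A M) (shrink A M)"
    by metis
  then have pick_shrink: "\<And>A M. P A M \<Longrightarrow>
      pick A M \<in> M \<and> shrink A M \<subseteq> M \<and> (\<forall>x\<in>shrink A M. pick A M < x) \<and>
      Q A (pick A M) (shrink A M) \<and> P (insert (pick A M) A) (shrink A M)"
    unfolding good_def by blast
  define st where
    "st = rec_nat ({}, M0) (\<lambda>_ s. (insert (pick (fst s) (snd s)) (fst s), shrink (fst s) (snd s)))"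
  define M where "M k = snd (st k)" for k
  define a where "a k = pick (fst (st k)) (M k)" for k
  have st_Suc: "st (Suc k) = (insert (a k) (fst (st k)), shrink (fst (st k)) (M k))" for k
    by (simp add: st_def a_def M_def)
  have inv: "fst (st k) = a ` {..<k} \<and> P (a ` {..<k}) (M k)" for k
  proof (induction k)
    case 0
    then show ?case using start by (simp add: st_def M_def)
  next
    case (Suc k)
    then show ?case
      using pick_shrink[of "a ` {..<k}" "M k"] st_Suc[of k]
      by (simp add: a_def M_def lessThan_Suc)
  qed
  have "a k \<in> M k \<and> M (Suc k) \<subseteq> M k \<and> (\<forall>x\<in>M (Suc k). a k < x) \<and>
      Q (a ` {..<k}) (a k) (M (Suc k))" for k
    using pick_shrink[of "a ` {..<k}" "M k"] inv[of k] st_Suc[of k]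
    by (simp add: a_def M_def)
  then have a_mem: "a k \<in> M k" and M_Suc: "M (Suc k) \<subseteq> M k"
    and a_less: "\<forall>x\<in>M (Suc k). a k < x" and Q: "Q (a ` {..<k}) (a k) (M (Suc k))" for k
    by simp_all
  have "a ` {k..} \<subseteq> M k" for k
  proof
    fix x assume "x \<in> a ` {k..}"
    then obtain j where "k \<le> j" "x = a j" by auto
    then show "x \<in> M k"
      using a_mem[of j] lift_Suc_antimono_le[of M, OF M_Suc \<open>k \<le> j\<close>] by auto
  qed
  moreover have "strict_mono a"
    unfolding strict_mono_Suc_iff using a_mem a_less by simp
  moreover have "M 0 = M0"
    by (simp add: M_def st_def)
  ultimately show thesis
    using that inv Q by simp
qed

section \<open>The Nash-Williams theorem\<close>

text \<open>The accept/reject terminology is that of Galvin and Prikry's proof.\<close>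

definition accepts :: "nat set set \<Rightarrow> nat set \<Rightarrow> nat set \<Rightarrow> bool" where
  "accepts F M s \<longleftrightarrow> (\<forall>N\<subseteq>M. infinite N \<longrightarrow> (\<exists>n. s \<union> (N \<inter> {..<n}) \<in> F))"

definition rejects :: "nat set set \<Rightarrow> nat set \<Rightarrow> nat set \<Rightarrow> bool" where
  "rejects F M s \<longleftrightarrow> (\<forall>N\<subseteq>M. infinite N \<longrightarrow> \<not> accepts F N s)"

definition decides :: "nat set set \<Rightarrow> nat set \<Rightarrow> nat set \<Rightarrow> bool" where
  "decides F M s \<longleftrightarrow> accepts F M s \<or> rejects F M s"

definition avoids :: "nat set set \<Rightarrow> nat set \<Rightarrow> bool" where
  "avoids F L \<longleftrightarrow> (\<forall>s\<subseteq>L. finite s \<longrightarrow> s \<notin> F)"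

lemma accepts_subset: "accepts F M s \<Longrightarrow> N \<subseteq> M \<Longrightarrow> accepts F N s"
  unfolding accepts_def by (meson order_trans)

lemma rejects_subset: "rejects F M s \<Longrightarrow> N \<subseteq> M \<Longrightarrow> rejects F N s"
  unfolding rejects_def by (meson order_trans)

lemma decides_subset: "decides F M s \<Longrightarrow> N \<subseteq> M \<Longrightarrow> decides F N s"
  unfolding decides_def using accepts_subset rejects_subset by meson

lemma avoids_subset: "avoids F M \<Longrightarrow> N \<subseteq> M \<Longrightarrow> avoids F N"
  unfolding avoids_def by (meson order_trans)

lemma accepts_if_mem: "s \<in> F \<Longrightarrow> accepts F M s"
  unfolding accepts_def by (metis Int_empty_right lessThan_0 sup_bot_right)

lemma not_mem_if_rejects: "rejects F M s \<Longrightarrow> infinite M \<Longrightarrow> s \<notin> F"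
  unfolding rejects_def using accepts_if_mem by blast

lemma exists_decides: "infinite M \<Longrightarrow> \<exists>N\<subseteq>M. infinite N \<and> decides F N s"
  unfolding decides_def rejects_def by blast

lemma exists_decides_all:
  assumes "finite T" and "infinite M"
  shows "\<exists>N\<subseteq>M. infinite N \<and> (\<forall>s\<in>T. decides F N s)"
  using assms
proof (induction T rule: finite_induct)
  case empty
  then show ?case by blast
next
  case (insert s T)
  then obtain N where "N \<subseteq> M" "infinite N" "\<forall>s\<in>T. decides F N s"
    by blast
  moreover obtain N' where "N' \<subseteq> N" "infinite N'" "decides F N' s"
    using exists_decides[OF \<open>infinite N\<close>] by blast
  ultimately show ?case
    using decides_subset by (metis insert_iff order_trans)
qed

lemma exists_deciding_sequence:
  assumes "infinite M"
  obtains a :: "nat \<Rightarrow> nat" where "strict_mono a" and "range a \<subseteq> M"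
    and "\<And>k s. s \<subseteq> a ` {..<k} \<Longrightarrow> decides F (a ` {k..}) s"
proof -
  define P where "P A N \<longleftrightarrow> finite A \<and> infinite N \<and> (\<forall>s\<subseteq>A. decides F N s)" for A N
  obtain M0 where "M0 \<subseteq> M" "infinite M0" "decides F M0 {}"
    using exists_decides[OF assms] by blast
  then have start: "P {} M0" unfolding P_def by (metis finite.emptyI subset_empty)
  have step: "\<exists>x N'. x \<in> N \<and> N' \<subseteq> N \<and> (\<forall>y\<in>N'. x < y) \<and> True \<and> P (insert x A) N'"
    if "P A N" for A N
  proof -
    from that have "finite A" and "infinite N" unfolding P_def by auto
    then obtain x where "x \<in> N" using infinite_imp_nonempty by blast
    have "infinite (N - {..x})" using \<open>infinite N\<close> by (simp add: Diff_infinite_finite)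
    moreover have "finite (Pow (insert x A))" using \<open>finite A\<close> by simp
    ultimately obtain N' where "N' \<subseteq> N - {..x}" "infinite N'" "\<forall>s\<in>Pow (insert x A). decides F N' s"
      using exists_decides_all by metis
    then have "N' \<subseteq> N" "\<forall>y\<in>N'. x < y" "P (insert x A) N'"
      using \<open>finite A\<close> unfolding P_def by auto
    then show ?thesis using \<open>x \<in> N\<close> by blast
  qed
  obtain a :: "nat \<Rightarrow> nat" and Ms where "Ms 0 = M0" "strict_mono a" and a_Ms: "\<forall>k. a ` {k..} \<subseteq> Ms k"
    and P_a: "\<forall>k. P (a ` {..<k}) (Ms k)"
    by (rule fusion_sequence[where Q = "\<lambda>_ _ _. True", OF start step]) blast
  have "range a \<subseteq> M"
    using \<open>M0 \<subseteq> M\<close> \<open>Ms 0 = M0\<close> a_Ms by auto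
  moreover have "decides F (a ` {k..}) s" if "s \<subseteq> a ` {..<k}" for k s
    using P_a a_Ms that unfolding P_def by (meson decides_subset)
  ultimately show thesis
    using \<open>strict_mono a\<close> by (intro that)
qed

lemma accepts_if_accepts_insert:
  assumes "\<And>x. x \<in> W \<Longrightarrow> accepts F {y\<in>W. x < y} (insert x s)"
  shows "accepts F W s"
  unfolding accepts_def
proof (intro allI impI)
  fix N assume "N \<subseteq> W" and "infinite N"
  define x where "x = (LEAST x. x \<in> N)"
  have "N \<noteq> {}" using \<open>infinite N\<close> by auto
  then have "x \<in> N" unfolding x_def by (metis LeastI ex_in_conv)
  define N' where "N' = N - {x}"
  have above: "\<forall>y\<in>N'. x < y"
  proof
    fix y assume "y \<in> N'"
    then have "y \<in> N" and "y \<noteq> x" unfolding N'_def by auto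
    then show "x < y" using Least_le[of "\<lambda>x. x \<in> N" y] unfolding x_def by simp
  qed
  then have "N' \<subseteq> {y\<in>W. x < y}" using \<open>N \<subseteq> W\<close> unfolding N'_def by auto
  moreover have "infinite N'" using \<open>infinite N\<close> unfolding N'_def by simp
  ultimately obtain n where n: "insert x s \<union> (N' \<inter> {..<n}) \<in> F"
    using assms[OF \<open>N \<subseteq> W\<close>[THEN subsetD, OF \<open>x \<in> N\<close>]] unfolding accepts_def by blast
  define m where "m = max n (Suc x)"
  have "N' \<inter> {..<m} = N' \<inter> {..<n}"
    using above unfolding m_def by auto
  moreover have "N \<inter> {..<m} = insert x (N' \<inter> {..<m})"
    using \<open>x \<in> N\<close> unfolding m_def N'_def by auto
  ultimately have "s \<union> (N \<inter> {..<m}) = insert x s \<union> (N' \<inter> {..<n})"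
    by auto
  then show "\<exists>n. s \<union> (N \<inter> {..<n}) \<in> F"
    using n by metis
qed

lemma rejects_finitely_many_insert:
  assumes "strict_mono a" and "rejects F (a ` {k..}) s"
  shows "finite {j. k \<le> j \<and> accepts F (a ` {Suc j..}) (insert (a j) s)}"
    (is "finite ?J")
proof (rule ccontr)
  assume "infinite ?J"
  then have "infinite (a ` ?J)"
    using strict_mono_imp_inj_on[OF \<open>strict_mono a\<close>] by (simp add: finite_image_iff inj_on_subset)
  moreover have "a ` ?J \<subseteq> a ` {k..}" by auto
  moreover have "accepts F (a ` ?J) s"
  proof (rule accepts_if_accepts_insert)
    fix x assume "x \<in> a ` ?J"
    then obtain j where "j \<in> ?J" "x = a j" by blast
    moreover have "{y \<in> a ` ?J. a j < y} \<subseteq> a ` {Suc j..}"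
      using \<open>strict_mono a\<close> by (auto simp: strict_mono_less Suc_le_eq)
    ultimately show "accepts F {y \<in> a ` ?J. x < y} (insert x s)"
      using accepts_subset by blast
  qed
  ultimately show False
    using \<open>rejects F (a ` {k..}) s\<close> unfolding rejects_def by blast
qed

lemma rejects_insert_step:
  assumes "strict_mono a"
    and decides_tail: "\<And>k s. s \<subseteq> a ` {..<k} \<Longrightarrow> decides F (a ` {k..}) s"
    and "finite A" and "A \<subseteq> a ` {..<k}" and rejects_A: "\<forall>s\<subseteq>A. rejects F (a ` {k..}) s"
  shows "\<exists>j\<ge>k. \<forall>s\<subseteq>insert (a j) A. rejects F (a ` {Suc j..}) s"
proof -
  define U where "U = (\<Union>s\<in>Pow A. {j. k \<le> j \<and> accepts F (a ` {Suc j..}) (insert (a j) s)})"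
  have "finite U"
    unfolding U_def using \<open>finite A\<close> rejects_A rejects_finitely_many_insert[OF \<open>strict_mono a\<close>]
    by simp
  then obtain j where "j \<in> {k..} - U"
    using infinite_Ici[of k] by (metis Diff_infinite_finite ex_in_conv finite.emptyI)
  then have "k \<le> j" and "j \<notin> U" by auto
  have "\<forall>s\<subseteq>insert (a j) A. rejects F (a ` {Suc j..}) s"
  proof (intro allI impI)
    fix s assume "s \<subseteq> insert (a j) A"
    show "rejects F (a ` {Suc j..}) s"
    proof (cases "a j \<in> s")
      case False
      then have "rejects F (a ` {k..}) s" using \<open>s \<subseteq> insert (a j) A\<close> rejects_A by auto
      moreover have "a ` {Suc j..} \<subseteq> a ` {k..}" using \<open>k \<le> j\<close> by auto
      ultimately show ?thesis by (rule rejects_subset)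
    next
      case True
      have "s - {a j} \<in> Pow A" using \<open>s \<subseteq> insert (a j) A\<close> by auto
      then have "\<not> accepts F (a ` {Suc j..}) (insert (a j) (s - {a j}))"
        using \<open>j \<notin> U\<close> \<open>k \<le> j\<close> unfolding U_def by blast
      then have "\<not> accepts F (a ` {Suc j..}) s"
        using True by (simp add: insert_absorb)
      moreover have "s \<subseteq> a ` {..<Suc j}"
        using \<open>s \<subseteq> insert (a j) A\<close> \<open>A \<subseteq> a ` {..<k}\<close> \<open>k \<le> j\<close> by fastforce
      ultimately show ?thesis
        using decides_tail[of s "Suc j"] unfolding decides_def by blast
    qed
  qed
  then show ?thesis using \<open>k \<le> j\<close> by blast
qed

lemma finite_subset_image_lessThan:
  fixes c :: "nat \<Rightarrow> 'a"
  assumes "finite s" and "s \<subseteq> range c"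
  shows "\<exists>k. s \<subseteq> c ` {..<k}"
proof -
  obtain I where "finite I" and "s = c ` I"
    using finite_subset_image[OF assms] by blast
  moreover obtain k where "I \<subseteq> {..<k}"
    using \<open>finite I\<close> finite_nat_bounded by blast
  ultimately show ?thesis by blast
qed

lemma exists_avoiding_subset:
  fixes a :: "nat \<Rightarrow> nat"
  assumes "strict_mono a"
    and decides_tail: "\<And>k s. s \<subseteq> a ` {..<k} \<Longrightarrow> decides F (a ` {k..}) s"
    and "rejects F (range a) {}"
  shows "\<exists>L\<subseteq>range a. infinite L \<and> avoids F L"
proof -
  define P where "P A M \<longleftrightarrow> finite A \<and>
      (\<exists>k. M = a ` {k..} \<and> A \<subseteq> a ` {..<k} \<and> (\<forall>s\<subseteq>A. rejects F M s))" for A M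
  have "range a = a ` {0..}" by simp
  then have start: "P {} (range a)"
    unfolding P_def using \<open>rejects F (range a) {}\<close> by auto
  have step: "\<exists>x M'. x \<in> M \<and> M' \<subseteq> M \<and> (\<forall>y\<in>M'. x < y) \<and> True \<and> P (insert x A) M'"
    if "P A M" for A M
  proof -
    obtain k where "finite A" "M = a ` {k..}" "A \<subseteq> a ` {..<k}" "\<forall>s\<subseteq>A. rejects F (a ` {k..}) s"
      using \<open>P A M\<close> unfolding P_def by blast
    then obtain j where "k \<le> j" and "\<forall>s\<subseteq>insert (a j) A. rejects F (a ` {Suc j..}) s"
      using rejects_insert_step[OF \<open>strict_mono a\<close> decides_tail] by blast
    moreover have "insert (a j) A \<subseteq> a ` {..<Suc j}"
      using \<open>A \<subseteq> a ` {..<k}\<close> \<open>k \<le> j\<close> by fastforce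
    ultimately have "P (insert (a j) A) (a ` {Suc j..})"
      unfolding P_def using \<open>finite A\<close> by blast
    moreover have "a j \<in> M" and "a ` {Suc j..} \<subseteq> M" and "\<forall>y\<in>a ` {Suc j..}. a j < y"
      using \<open>M = a ` {k..}\<close> \<open>k \<le> j\<close> \<open>strict_mono a\<close> by (auto simp: strict_mono_less)
    ultimately show ?thesis by blast
  qed
  obtain c :: "nat \<Rightarrow> nat" and Ms where "Ms 0 = range a" "strict_mono c" and c_Ms: "\<forall>k. c ` {k..} \<subseteq> Ms k"
    and P_c: "\<forall>k. P (c ` {..<k}) (Ms k)"
    by (rule fusion_sequence[where Q = "\<lambda>_ _ _. True", OF start step]) blast
  have "range c \<subseteq> range a"
    using \<open>Ms 0 = range a\<close> c_Ms by (metis atLeast_0)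
  moreover have "infinite (range c)"
    using \<open>strict_mono c\<close> by (simp add: range_inj_infinite strict_mono_imp_inj_on)
  moreover have "avoids F (range c)"
    unfolding avoids_def
  proof (intro allI impI notI)
    fix s assume "s \<subseteq> range c" and "finite s" and "s \<in> F"
    then obtain k where "s \<subseteq> c ` {..<k}"
      using finite_subset_image_lessThan by blast
    moreover obtain k' where "Ms k = a ` {k'..}" and "\<forall>s\<subseteq>c ` {..<k}. rejects F (Ms k) s"
      using P_c unfolding P_def by blast
    moreover have "infinite (a ` {k'..})"
      using \<open>strict_mono a\<close> infinite_Ici[of k']
      by (simp add: finite_image_iff strict_mono_imp_inj_on inj_on_subset)
    ultimately have "rejects F (a ` {k'..}) s" and "infinite (a ` {k'..})"
      by auto
    then show False
      using not_mem_if_rejects \<open>s \<in> F\<close> by blast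
  qed
  ultimately show ?thesis by blast
qed

theorem Nash_Williams:
  assumes "infinite M"
  shows "\<exists>L\<subseteq>M. infinite L \<and> (avoids F L \<or> accepts F L {})"
proof -
  obtain a :: "nat \<Rightarrow> nat" where "strict_mono a" and "range a \<subseteq> M"
    and decides_tail: "\<And>k s. s \<subseteq> a ` {..<k} \<Longrightarrow> decides F (a ` {k..}) s"
    using exists_deciding_sequence[OF assms] by metis
  have "infinite (range a)"
    using \<open>strict_mono a\<close> by (simp add: range_inj_infinite strict_mono_imp_inj_on)
  have "decides F (range a) {}"
    using decides_tail[of "{}" 0] by simp
  then consider "accepts F (range a) {}" | "rejects F (range a) {}"
    unfolding decides_def by blast
  then show ?thesis
  proof cases
    case 1
    then show ?thesis using \<open>range a \<subseteq> M\<close> \<open>infinite (range a)\<close> by blast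
  next
    case 2
    then show ?thesis
      using exists_avoiding_subset[OF \<open>strict_mono a\<close> decides_tail] \<open>range a \<subseteq> M\<close> by (meson order_trans)
  qed
qed

corollary Nash_Williams_finite_family:
  assumes "finite T" and "infinite M"
  shows "\<exists>L\<subseteq>M. infinite L \<and> (\<forall>F\<in>T. avoids F L \<or> accepts F L {})"
  using assms
proof (induction T rule: finite_induct)
  case empty
  then show ?case by blast
next
  case (insert F T)
  then obtain N where "N \<subseteq> M" "infinite N" "\<forall>F\<in>T. avoids F N \<or> accepts F N {}"
    by blast
  moreover obtain L where "L \<subseteq> N" "infinite L" "avoids F L \<or> accepts F L {}"
    using Nash_Williams[OF \<open>infinite N\<close>] by blast
  ultimately show ?case
    using avoids_subset accepts_subset by (metis insert_iff order_trans)
qed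

section \<open>Forcing\<close>

text \<open>A finite nonempty set \<open>\<sigma>\<close> stands for the oracle string of length \<open>Max \<sigma> + 1\<close> with
support \<open>\<sigma>\<close>.\<close>

definition forces :: "recf \<Rightarrow> nat set \<Rightarrow> nat \<Rightarrow> bool" where
  "forces \<Phi> \<sigma> z \<longleftrightarrow> \<sigma> \<noteq> {} \<and> finite \<sigma> \<and> (\<forall>A. A \<inter> {..Max \<sigma>} = \<sigma> \<longrightarrow> oeval A \<Phi> [z] 1)"

lemma forces_extend:
  assumes "forces \<Phi> \<sigma> z" and "finite \<tau>" and "\<tau> \<inter> {..Max \<sigma>} = \<sigma>"
  shows "forces \<Phi> \<tau> z"
proof -
  have "\<sigma> \<noteq> {}" and "\<sigma> \<subseteq> \<tau>" using assms unfolding forces_def by auto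
  then have "Max \<sigma> \<le> Max \<tau>" using Max_mono \<open>finite \<tau>\<close> by blast
  have "oeval A \<Phi> [z] 1" if "A \<inter> {..Max \<tau>} = \<tau>" for A
  proof -
    have "A \<inter> {..Max \<sigma>} = (A \<inter> {..Max \<tau>}) \<inter> {..Max \<sigma>}"
      using \<open>Max \<sigma> \<le> Max \<tau>\<close> by auto
    also have "\<dots> = \<sigma>" using that assms(3) by simp
    finally show ?thesis using assms(1) unfolding forces_def by simp
  qed
  then show ?thesis
    using \<open>\<sigma> \<noteq> {}\<close> \<open>\<sigma> \<subseteq> \<tau>\<close> \<open>finite \<tau>\<close> unfolding forces_def by auto
qed

lemma forces_initial_segment_mono:
  assumes "forces \<Phi> (L \<inter> {..<n}) z" and "n \<le> m"
  shows "forces \<Phi> (L \<inter> {..<m}) z"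
proof (rule forces_extend[OF assms(1)])
  have "L \<inter> {..<n} \<noteq> {}" using assms(1) unfolding forces_def by simp
  then have "Max (L \<inter> {..<n}) \<in> L \<inter> {..<n}" by (intro Max_in) simp_all
  then show "L \<inter> {..<m} \<inter> {..Max (L \<inter> {..<n})} = L \<inter> {..<n}"
    using \<open>n \<le> m\<close> by (auto intro: Max_ge)
qed simp

lemma exists_forcing_initial_segment:
  assumes "oeval S \<Phi> [z] 1" and "infinite S"
  shows "\<exists>t. forces \<Phi> (S \<inter> {..t}) z"
proof -
  obtain u where u: "\<And>A. A \<inter> {..<u} = S \<inter> {..<u} \<Longrightarrow> oeval A \<Phi> [z] 1"
    using oeval_finitely_determined[OF assms(1)] unfolding finitely_determined_def by meson
  obtain t where "t \<in> S" and "u \<le> t"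
    using \<open>infinite S\<close> unfolding infinite_nat_iff_unbounded_le by meson
  then have "Max (S \<inter> {..t}) = t" by (intro Max_eqI) auto
  have "oeval A \<Phi> [z] 1" if "A \<inter> {..t} = S \<inter> {..t}" for A
  proof (rule u)
    have "{..<u} \<subseteq> {..t}" using \<open>u \<le> t\<close> by auto
    then show "A \<inter> {..<u} = S \<inter> {..<u}" using that by blast
  qed
  then have "forces \<Phi> (S \<inter> {..t}) z"
    unfolding forces_def using \<open>t \<in> S\<close> \<open>Max (S \<inter> {..t}) = t\<close> by auto
  then show ?thesis ..
qed

lemma mem_if_computes_forced:
  assumes computes: "\<forall>S. S \<subseteq> D \<longrightarrow> infinite S \<longrightarrow> functional_computes \<Phi> S C"
    and "infinite D" and "forces \<Phi> \<sigma> z" and "\<sigma> \<subseteq> D"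
  shows "z \<in> C"
proof -
  define S where "S = \<sigma> \<union> (D - {..Max \<sigma>})"
  have "finite \<sigma>" using \<open>forces \<Phi> \<sigma> z\<close> unfolding forces_def by simp
  then have "S \<inter> {..Max \<sigma>} = \<sigma>" unfolding S_def by (auto intro: Max_ge)
  then have "oeval S \<Phi> [z] 1" using \<open>forces \<Phi> \<sigma> z\<close> unfolding forces_def by simp
  moreover have "S \<subseteq> D" and "infinite S"
    using \<open>\<sigma> \<subseteq> D\<close> \<open>infinite D\<close> unfolding S_def by (auto simp: Diff_infinite_finite)
  ultimately show "z \<in> C"
    using computes unfolding functional_computes_def by (metis zero_neq_one)
qed

definition forcing_only :: "recf \<Rightarrow> nat set \<Rightarrow> nat \<Rightarrow> nat set set" where
  "forcing_only \<Phi> Z z = {\<sigma>. forces \<Phi> \<sigma> z \<and> (\<forall>z'\<in>Z - {z}. \<not> forces \<Phi> \<sigma> z')}"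

lemma accepts_forcing_only_unique:
  assumes "infinite L" and "z\<^sub>1 \<in> Z" and "z\<^sub>2 \<in> Z"
    and "accepts (forcing_only \<Phi> Z z\<^sub>1) L {}" and "accepts (forcing_only \<Phi> Z z\<^sub>2) L {}"
  shows "z\<^sub>1 = z\<^sub>2"
proof -
  obtain n\<^sub>1 n\<^sub>2 where n\<^sub>1: "L \<inter> {..<n\<^sub>1} \<in> forcing_only \<Phi> Z z\<^sub>1"
    and n\<^sub>2: "L \<inter> {..<n\<^sub>2} \<in> forcing_only \<Phi> Z z\<^sub>2"
    using assms(1,4,5) unfolding accepts_def by (metis order_refl sup_bot_left)
  define m where "m = max n\<^sub>1 n\<^sub>2"
  have "forces \<Phi> (L \<inter> {..<m}) z\<^sub>1" and "forces \<Phi> (L \<inter> {..<m}) z\<^sub>2"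
    using n\<^sub>1 n\<^sub>2 forces_initial_segment_mono unfolding forcing_only_def m_def by fastforce+
  moreover have "L \<inter> {..<m} \<in> forcing_only \<Phi> Z z\<^sub>1 \<or> L \<inter> {..<m} \<in> forcing_only \<Phi> Z z\<^sub>2"
    using n\<^sub>1 n\<^sub>2 unfolding m_def max_def by simp
  ultimately show ?thesis
    using assms(2,3) unfolding forcing_only_def by blast
qed

lemma exists_unclaimed:
  assumes "finite E" and "card E < card Z"
    and unique: "\<And>e z z'. e \<in> E \<Longrightarrow> z \<in> Z \<Longrightarrow> z' \<in> Z \<Longrightarrow> R e z \<Longrightarrow> R e z' \<Longrightarrow> z = z'"
  shows "\<exists>a\<in>Z. \<forall>e\<in>E. \<not> R e a"
proof -
  have "finite Z" using assms(2) by (metis card.infinite not_less0)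
  define claimed where "claimed = (\<Union>e\<in>E. {z\<in>Z. R e z})"
  have "card {z\<in>Z. R e z} \<le> Suc 0" if "e \<in> E" for e
    using \<open>finite Z\<close> unique[OF that] by (subst card_le_Suc0_iff_eq) auto
  then have "card claimed \<le> card E"
    unfolding claimed_def using card_UN_le[OF \<open>finite E\<close>, of "\<lambda>e. {z\<in>Z. R e z}"]
      sum_mono[of E "\<lambda>e. card {z\<in>Z. R e z}" "\<lambda>_. Suc 0"] by simp
  then have "claimed \<noteq> Z" using assms(2) by auto
  moreover have "claimed \<subseteq> Z" unfolding claimed_def by auto
  ultimately obtain a where "a \<in> Z" and "a \<notin> claimed" by blast
  then show ?thesis unfolding claimed_def by blast
qed

definition hides :: "recf set \<Rightarrow> nat set \<Rightarrow> nat \<Rightarrow> nat set \<Rightarrow> bool" where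
  "hides E Z a M \<longleftrightarrow> (\<forall>\<Phi>\<in>E. \<forall>\<sigma>\<subseteq>M. forces \<Phi> \<sigma> a \<longrightarrow> (\<exists>z\<in>Z - {a}. forces \<Phi> \<sigma> z))"

lemma exists_hiding_block:
  assumes "finite E" and "infinite M"
  obtains a Z M' where "a \<in> Z" and "Z \<subseteq> M" and "M' \<subseteq> M" and "infinite M'"
    and "\<forall>z\<in>Z. \<forall>y\<in>M'. z < y" and "hides E Z a M'"
proof -
  obtain Z where "finite Z" "card Z = Suc (card E)" "Z \<subseteq> M"
    using infinite_arbitrarily_large[OF \<open>infinite M\<close>] by blast
  define T where "T = (\<lambda>(\<Phi>, z). forcing_only \<Phi> Z z) ` (E \<times> Z)"
  have "finite T" unfolding T_def using \<open>finite E\<close> \<open>finite Z\<close> by simp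
  moreover have "infinite (M - {..Max Z})" using \<open>infinite M\<close> by (simp add: Diff_infinite_finite)
  ultimately obtain L where "L \<subseteq> M - {..Max Z}" "infinite L"
    and dichotomy: "\<forall>F\<in>T. avoids F L \<or> accepts F L {}"
    using Nash_Williams_finite_family by meson
  have "\<exists>a\<in>Z. \<forall>\<Phi>\<in>E. \<not> accepts (forcing_only \<Phi> Z a) L {}"
  proof (rule exists_unclaimed[OF \<open>finite E\<close>])
    show "card E < card Z" using \<open>card Z = Suc (card E)\<close> by simp
    show "z = z'" if "z \<in> Z" "z' \<in> Z" "accepts (forcing_only \<Phi> Z z) L {}"
      "accepts (forcing_only \<Phi> Z z') L {}" for \<Phi> z z'
      by (rule accepts_forcing_only_unique[OF \<open>infinite L\<close> that])
  qed
  then obtain a where "a \<in> Z" and not_accepted: "\<forall>\<Phi>\<in>E. \<not> accepts (forcing_only \<Phi> Z a) L {}" ..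
  have "hides E Z a L"
    unfolding hides_def
  proof (intro ballI allI impI)
    fix \<Phi> \<sigma> assume "\<Phi> \<in> E" and "\<sigma> \<subseteq> L" and "forces \<Phi> \<sigma> a"
    have "forcing_only \<Phi> Z a \<in> T" unfolding T_def using \<open>\<Phi> \<in> E\<close> \<open>a \<in> Z\<close> by force
    then have "avoids (forcing_only \<Phi> Z a) L" using dichotomy not_accepted \<open>\<Phi> \<in> E\<close> by blast
    moreover have "finite \<sigma>" using \<open>forces \<Phi> \<sigma> a\<close> unfolding forces_def by simp
    ultimately have "\<sigma> \<notin> forcing_only \<Phi> Z a" using \<open>\<sigma> \<subseteq> L\<close> unfolding avoids_def by blast
    then show "\<exists>z\<in>Z - {a}. forces \<Phi> \<sigma> z" using \<open>forces \<Phi> \<sigma> a\<close> unfolding forcing_only_def by blast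
  qed
  moreover have "\<forall>z\<in>Z. \<forall>y\<in>L. z < y"
  proof (intro ballI)
    fix z y assume "z \<in> Z" and "y \<in> L"
    then show "z < y" using Max_ge[OF \<open>finite Z\<close> \<open>z \<in> Z\<close>] \<open>L \<subseteq> M - {..Max Z}\<close> by auto
  qed
  moreover have "L \<subseteq> M" using \<open>L \<subseteq> M - {..Max Z}\<close> by blast
  ultimately show thesis
    using that \<open>a \<in> Z\<close> \<open>Z \<subseteq> M\<close> \<open>infinite L\<close> by blast
qed

section \<open>Construction of the set B\<close>

instance recf :: countable by countable_datatype

lemma exists_hiding_sequence:
  assumes "infinite X"
  obtains b :: "nat \<Rightarrow> nat" and M Z :: "nat \<Rightarrow> nat set"
  where "strict_mono b" and "range b \<subseteq> X" and "\<forall>k. b ` {k..} \<subseteq> M k"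
    and "\<forall>k. Z k \<inter> range b = {b k}" and "\<forall>k. hides (from_nat ` {..k}) (Z k) (b k) (M (Suc k))"
proof -
  define P where "P A M \<longleftrightarrow> finite A \<and> infinite M \<and> (\<forall>x\<in>A. \<forall>y\<in>M. x < y)" for A M :: "nat set"
  \<comment> \<open>At stage \<open>k\<close> the set \<open>A\<close> of chosen elements has \<open>k\<close> elements, so \<open>\<Phi>\<^sub>0, \<dots>, \<Phi>\<^sub>k\<close> are handled.\<close>
  define Q where "Q A b M' \<longleftrightarrow> (\<exists>Z. b \<in> Z \<and> (\<forall>z\<in>Z. \<forall>x\<in>A. x < z) \<and> (\<forall>z\<in>Z. \<forall>y\<in>M'. z < y) \<and>
      hides (from_nat ` {..card A}) Z b M')" for A b M'
  have start: "P {} X" using assms unfolding P_def by simp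
  have step: "\<exists>b M'. b \<in> M \<and> M' \<subseteq> M \<and> (\<forall>y\<in>M'. b < y) \<and> Q A b M' \<and> P (insert b A) M'"
    if "P A M" for A M
  proof -
    have "finite A" and "infinite M" and A_below: "\<forall>x\<in>A. \<forall>y\<in>M. x < y"
      using that unfolding P_def by auto
    have "finite (from_nat ` {..card A} :: recf set)" by simp
    then obtain b Z M' where "b \<in> Z" "Z \<subseteq> M" "M' \<subseteq> M" "infinite M'"
      and Z_below: "\<forall>z\<in>Z. \<forall>y\<in>M'. z < y" and "hides (from_nat ` {..card A}) Z b M'"
      using \<open>infinite M\<close> by (rule exists_hiding_block)
    have "\<forall>z\<in>Z. \<forall>x\<in>A. x < z" using A_below \<open>Z \<subseteq> M\<close> by auto
    then have "Q A b M'"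
      unfolding Q_def using \<open>b \<in> Z\<close> Z_below \<open>hides (from_nat ` {..card A}) Z b M'\<close> by auto
    moreover have "\<forall>x\<in>insert b A. \<forall>y\<in>M'. x < y"
      using \<open>b \<in> Z\<close> Z_below A_below \<open>M' \<subseteq> M\<close> by auto
    then have "P (insert b A) M'"
      unfolding P_def using \<open>finite A\<close> \<open>infinite M'\<close> by simp
    moreover have "b \<in> M" and "\<forall>y\<in>M'. b < y" using \<open>b \<in> Z\<close> \<open>Z \<subseteq> M\<close> Z_below by auto
    ultimately show ?thesis
      using \<open>M' \<subseteq> M\<close> by auto
  qed
  obtain b :: "nat \<Rightarrow> nat" and M where "M 0 = X" and "strict_mono b" and b_M: "\<forall>k. b ` {k..} \<subseteq> M k"
    and "\<forall>k. P (b ` {..<k}) (M k)" and Q_b: "\<forall>k. Q (b ` {..<k}) (b k) (M (Suc k))"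
    by (rule fusion_sequence[OF start step])
  have "card (b ` {..<k}) = k" for k
    using strict_mono_imp_inj_on[OF \<open>strict_mono b\<close>] by (simp add: card_image inj_on_subset)
  then have "\<forall>k. \<exists>Z. b k \<in> Z \<and> (\<forall>z\<in>Z. \<forall>x\<in>b ` {..<k}. x < z) \<and> (\<forall>z\<in>Z. \<forall>y\<in>M (Suc k). z < y) \<and>
      hides (from_nat ` {..k}) Z (b k) (M (Suc k))"
    using Q_b unfolding Q_def by metis
  then obtain Z where "\<forall>k. b k \<in> Z k" and Z_above: "\<forall>k. \<forall>z\<in>Z k. \<forall>x\<in>b ` {..<k}. x < z"
    and Z_below: "\<forall>k. \<forall>z\<in>Z k. \<forall>y\<in>M (Suc k). z < y"
    and hides_Z: "\<forall>k. hides (from_nat ` {..k}) (Z k) (b k) (M (Suc k))"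
    by metis
  have "Z k \<inter> range b = {b k}" for k
  proof
    show "{b k} \<subseteq> Z k \<inter> range b" using \<open>\<forall>k. b k \<in> Z k\<close> by blast
    show "Z k \<inter> range b \<subseteq> {b k}"
    proof
      fix z assume "z \<in> Z k \<inter> range b"
      then obtain j where "z = b j" and "b j \<in> Z k" by blast
      consider "j < k" | "j = k" | "k < j" by linarith
      then show "z \<in> {b k}"
      proof cases
        case 1
        then have "b j < b j" using Z_above \<open>b j \<in> Z k\<close> by blast
        then show ?thesis by simp
      next
        case 2
        then show ?thesis using \<open>z = b j\<close> by simp
      next
        case 3
        then have "b j \<in> M (Suc k)" using b_M by fastforce
        then have "b j < b j" using Z_below \<open>b j \<in> Z k\<close> by blast
        then show ?thesis by simp
      qed
    qed
  qed
  then have "\<forall>k. Z k \<inter> range b = {b k}" ..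
  moreover have "range b \<subseteq> X"
    using b_M \<open>M 0 = X\<close> by (metis atLeast_0)
  ultimately show thesis
    using \<open>strict_mono b\<close> b_M hides_Z by (intro that)
qed

lemma not_computable_on_hiding_sequence:
  fixes b :: "nat \<Rightarrow> nat" and M Z :: "nat \<Rightarrow> nat set"
  assumes b_M: "\<forall>k. b ` {k..} \<subseteq> M k" and Z_b: "\<forall>k. Z k \<inter> range b = {b k}"
    and hides: "\<forall>k. hides (from_nat ` {..k}) (Z k) (b k) (M (Suc k))"
    and "C \<subseteq> range b" and "D \<subseteq> range b" and "infinite C" and "infinite D"
  shows "\<not> (\<exists>\<Phi>. \<forall>S. S \<subseteq> D \<longrightarrow> infinite S \<longrightarrow> functional_computes \<Phi> S C)"
proof
  assume "\<exists>\<Phi>. \<forall>S. S \<subseteq> D \<longrightarrow> infinite S \<longrightarrow> functional_computes \<Phi> S C"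
  then obtain \<Phi> where computes: "\<forall>S. S \<subseteq> D \<longrightarrow> infinite S \<longrightarrow> functional_computes \<Phi> S C" ..
  have "\<not> C \<subseteq> b ` {..<to_nat \<Phi>}"
    using \<open>infinite C\<close> finite_subset by blast
  then obtain k where "b k \<in> C" and "to_nat \<Phi> \<le> k"
    using \<open>C \<subseteq> range b\<close> by (force simp: not_less)
  define S where "S = D \<inter> M (Suc k)"
  have "D \<subseteq> b ` {..k} \<union> S"
  proof
    fix x assume "x \<in> D"
    then obtain j where "x = b j" using \<open>D \<subseteq> range b\<close> by blast
    show "x \<in> b ` {..k} \<union> S"
    proof (cases "j \<le> k")
      case False
      then have "x \<in> M (Suc k)" using b_M \<open>x = b j\<close> by fastforce
      then show ?thesis using \<open>x \<in> D\<close> unfolding S_def by blast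
    qed (use \<open>x = b j\<close> in blast)
  qed
  then have "infinite S"
    using \<open>infinite D\<close> by (meson finite_Un finite_atMost finite_imageI finite_subset)
  then have "oeval S \<Phi> [b k] 1"
    using computes \<open>b k \<in> C\<close> unfolding S_def functional_computes_def by simp
  then obtain t where "forces \<Phi> (S \<inter> {..t}) (b k)"
    using exists_forcing_initial_segment \<open>infinite S\<close> by blast
  moreover have "S \<inter> {..t} \<subseteq> M (Suc k)" unfolding S_def by blast
  moreover have "\<Phi> \<in> from_nat ` {..k}"
    using \<open>to_nat \<Phi> \<le> k\<close> by (metis atMost_iff from_nat_to_nat image_eqI)
  ultimately obtain z where "z \<in> Z k - {b k}" and "forces \<Phi> (S \<inter> {..t}) z"
    using hides unfolding hides_def by blast
  moreover have "S \<inter> {..t} \<subseteq> D" unfolding S_def by blast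
  ultimately have "z \<in> C"
    using mem_if_computes_forced[OF computes \<open>infinite D\<close>] by blast
  then show False
    using Z_b \<open>C \<subseteq> range b\<close> \<open>z \<in> Z k - {b k}\<close> by blast
qed

theorem proposition3p8:
  fixes X :: "nat set"
  assumes "infinite X"
  shows "\<exists>B. B \<subseteq> X \<and> infinite B \<and>
           (\<forall>C D. C \<subseteq> B \<longrightarrow> D \<subseteq> B \<longrightarrow> infinite C \<longrightarrow> infinite D \<longrightarrow>
              \<not> (\<exists>\<Phi>. \<forall>S. S \<subseteq> D \<longrightarrow> infinite S \<longrightarrow> functional_computes \<Phi> S C))"
proof -
  obtain b :: "nat \<Rightarrow> nat" and M Z :: "nat \<Rightarrow> nat set"
    where "strict_mono b" and "range b \<subseteq> X" and b_M: "\<forall>k. b ` {k..} \<subseteq> M k"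
      and Z_b: "\<forall>k. Z k \<inter> range b = {b k}" and hides: "\<forall>k. hides (from_nat ` {..k}) (Z k) (b k) (M (Suc k))"
    using assms by (rule exists_hiding_sequence)
  have "infinite (range b)"
    using \<open>strict_mono b\<close> by (simp add: range_inj_infinite strict_mono_imp_inj_on)
  then show ?thesis
    using \<open>range b \<subseteq> X\<close> not_computable_on_hiding_sequence[OF b_M Z_b hides] by auto
qed

end
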